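(* If the link function is unknown, the optimal policy cannot be identified from the transitions and the comparison probabilities, even when there are only two candidate link functions: there exist an episodic MDP (with horizon $H=2$, known transitions), two link functions $\sigma_1,\sigma_2$ and two reward functions $r^{(1)},r^{(2)}$ such that $\sigma_1(r^{(1)}(\tau)-r^{(1)}(\tau'))=\sigma_2(r^{(2)}(\tau)-r^{(2)}(\tau'))$ for all pairs of trajectories $\tau,\tau'$, while the optimal policy with respect to $r^{(1)}$ and the optimal policy with respect to $r^{(2)}$ differ (each is suboptimal for the other reward).
   Context: Episodic MDP with trajectories $\tau$; a comparison oracle with link function $\sigma$ and reward $r$ returns $\tau\succ\tau'$ with probability $\sigma(r(\tau)-r(\tau'))$. A policy is optimal for $r$ if it maximizes $\mathbb{E}_{\tau\sim\pi}[r(\tau)]$. *)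

theory Defs
  imports "HOL-Probability.Probability"
begin

text \<open>Link function: strictly increasing, continuous, values in [0,1],
  and symmetric: sigma(-x) = 1 - sigma(x) (so that P(tau > tau') + P(tau' > tau) = 1).\<close>
definition link_function :: "(real \<Rightarrow> real) \<Rightarrow> bool" where
  "link_function \<sigma> \<longleftrightarrow> strict_mono \<sigma> \<and> continuous_on UNIV \<sigma>
     \<and> (\<forall>x. 0 \<le> \<sigma> x \<and> \<sigma> x \<le> 1) \<and> (\<forall>x. \<sigma> (- x) = 1 - \<sigma> x)"

record mdp2 =
  St :: "nat set"
  Act :: "nat set"
  init :: "nat pmf"
  trans :: "nat \<Rightarrow> nat \<Rightarrow> nat \<Rightarrow> nat pmf"

definition wf_mdp2 :: "mdp2 \<Rightarrow> bool" where
  "wf_mdp2 M \<longleftrightarrow> finite (St M) \<and> St M \<noteq> {} \<and> finite (Act M) \<and> Act M \<noteq> {}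
     \<and> set_pmf (init M) \<subseteq> St M
     \<and> (\<forall>h s a. s \<in> St M \<longrightarrow> a \<in> Act M \<longrightarrow> set_pmf (trans M h s a) \<subseteq> St M)"

text \<open>Trajectories of length H = 2: (s1, a1, s2, a2).\<close>
type_synonym traj = "nat \<times> nat \<times> nat \<times> nat"

definition trajs :: "mdp2 \<Rightarrow> traj set" where
  "trajs M = St M \<times> Act M \<times> St M \<times> Act M"

text \<open>(Markov, possibly randomized) policy: pi h s is the action distribution at step h in state s.\<close>
type_synonym policy = "nat \<Rightarrow> nat \<Rightarrow> nat pmf"

definition policy_of :: "mdp2 \<Rightarrow> policy \<Rightarrow> bool" where
  "policy_of M \<pi> \<longleftrightarrow> (\<forall>h s. s \<in> St M \<longrightarrow> set_pmf (\<pi> h s) \<subseteq> Act M)"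

definition traj_dist :: "mdp2 \<Rightarrow> policy \<Rightarrow> traj pmf" where
  "traj_dist M \<pi> = do {
     s1 \<leftarrow> init M;
     a1 \<leftarrow> \<pi> 1 s1;
     s2 \<leftarrow> trans M 1 s1 a1;
     a2 \<leftarrow> \<pi> 2 s2;
     return_pmf (s1, a1, s2, a2) }"

definition value_of :: "mdp2 \<Rightarrow> policy \<Rightarrow> (traj \<Rightarrow> real) \<Rightarrow> real" where
  "value_of M \<pi> r = measure_pmf.expectation (traj_dist M \<pi>) r"

definition optimal :: "mdp2 \<Rightarrow> (traj \<Rightarrow> real) \<Rightarrow> policy \<Rightarrow> bool" where
  "optimal M r \<pi> \<longleftrightarrow> policy_of M \<pi> \<and>
     (\<forall>\<pi>'. policy_of M \<pi>' \<longrightarrow> value_of M \<pi>' r \<le> value_of M \<pi> r)"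

end

theory Submission
  imports Defs
begin

text \<open>Comparison probabilities only determine the composite \<open>\<sigma> (r \<tau> - r \<tau>')\<close>. For an odd,
  continuous, strictly increasing \<open>h\<close>, \<open>\<sigma> \<circ> h\<close> is again a link function, and the pairs
  \<open>(\<sigma>, h \<circ> g)\<close> and \<open>(\<sigma> \<circ> h, g)\<close> produce the same comparisons as soon as \<open>h\<close> is additive
  on the differences of the values of \<open>g\<close>. Such an \<open>h\<close> preserves the order of rewards but not
  expectations: between a sure reward 1 and a 1/4 chance of reward 3 the sure reward is better,
  but after stretching the rewards 0, 1, 3 to 0, 1, 5 (consistently, with 2 stretched to 4) the
  gamble is better.\<close>

definition tanh_link :: "real \<Rightarrow> real" where
  "tanh_link x = (1 + tanh x) / 2"

lemma link_function_tanh_link: "link_function tanh_link"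
proof -
  have "strict_mono tanh_link"
    by (rule strict_monoI) (simp add: tanh_link_def)
  moreover have "continuous_on UNIV tanh_link"
    unfolding tanh_link_def by (intro continuous_intros) (simp_all add: less_imp_neq[symmetric])
  moreover have "0 \<le> tanh_link x \<and> tanh_link x \<le> 1" for x
    using tanh_real_bounds[of x] by (simp add: tanh_link_def)
  ultimately show ?thesis
    unfolding link_function_def by (simp add: tanh_link_def field_simps)
qed

lemma link_function_comp_odd:
  assumes "link_function \<sigma>" "strict_mono h" "continuous_on UNIV h" "\<And>x. h (- x) = - h x"
  shows "link_function (\<sigma> \<circ> h)"
proof -
  have "continuous_on UNIV (\<sigma> \<circ> h)"
    using assms(1,3) continuous_on_compose2[of UNIV \<sigma> UNIV h]
    unfolding link_function_def comp_def by simp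
  with assms show ?thesis
    unfolding link_function_def by (auto simp: strict_mono_def)
qed

definition stretch :: "real \<Rightarrow> real" where
  "stretch x = x + 2 * (max (- 2) (min 2 x) - max (- 1) (min 1 x))"

lemma strict_mono_stretch: "strict_mono stretch"
  by (rule strict_monoI) (auto simp: stretch_def min_def max_def)

lemma continuous_on_stretch: "continuous_on UNIV stretch"
  unfolding stretch_def by (intro continuous_intros)

lemma stretch_minus: "stretch (- x) = - stretch x"
  by (auto simp: stretch_def min_def max_def)

lemma stretch_diff:
  assumes "x \<in> {0, 1, 3}" "y \<in> {0, 1, 3}"
  shows "stretch x - stretch y = stretch (x - y)"
  using assms by (auto simp: stretch_def)

definition outcome :: "nat \<Rightarrow> nat pmf" where
  "outcome a = (if a = 0 then return_pmf 4 else pmf_of_set {0, 1, 2, 3})"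

definition gamble_mdp :: mdp2 where
  "gamble_mdp = \<lparr>St = {0..4}, Act = {0, 1}, init = return_pmf 0, trans = (\<lambda>_ _ a. outcome a)\<rparr>"

definition state2_reward :: "(nat \<Rightarrow> real) \<Rightarrow> traj \<Rightarrow> real" where
  "state2_reward g = (\<lambda>(_, _, s2, _). g s2)"

definition action_value :: "(nat \<Rightarrow> real) \<Rightarrow> nat \<Rightarrow> real" where
  "action_value g a = measure_pmf.expectation (outcome a) g"

lemma wf_gamble_mdp: "wf_mdp2 gamble_mdp"
  by (auto simp: wf_mdp2_def gamble_mdp_def outcome_def)

lemma policy_of_const: "a \<in> {0, 1} \<Longrightarrow> policy_of gamble_mdp (\<lambda>_ _. return_pmf a)"
  by (auto simp: policy_of_def gamble_mdp_def)

lemma action_value_sure: "action_value g 0 = g 4"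
  by (simp add: action_value_def outcome_def)

lemma action_value_gamble: "action_value g 1 = (g 0 + g 1 + g 2 + g 3) / 4"
  by (simp add: action_value_def outcome_def integral_pmf_of_set)

lemma finite_set_pmf_outcome: "finite (set_pmf (outcome a))"
  by (simp add: outcome_def)

lemma value_of_gamble_mdp:
  assumes "policy_of gamble_mdp \<pi>"
  shows "value_of gamble_mdp \<pi> (state2_reward g)
           = action_value g 0 + pmf (\<pi> 1 0) 1 * (action_value g 1 - action_value g 0)"
proof -
  have support: "set_pmf (\<pi> 1 0) \<subseteq> {0, 1}"
    using assms by (auto simp: policy_of_def gamble_mdp_def)
  have marginal: "map_pmf (\<lambda>(_, _, s2, _). s2) (traj_dist gamble_mdp \<pi>) = \<pi> 1 0 \<bind> outcome"
    by (simp add: traj_dist_def gamble_mdp_def map_bind_pmf bind_return_pmf bind_return_pmf')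
  then have "value_of gamble_mdp \<pi> (state2_reward g) = measure_pmf.expectation (\<pi> 1 0 \<bind> outcome) g"
    unfolding value_of_def state2_reward_def marginal[symmetric] by (simp add: case_prod_unfold)
  also have "\<dots> = pmf (\<pi> 1 0) 0 * action_value g 0 + pmf (\<pi> 1 0) 1 * action_value g 1"
    using support by (subst pmf_expectation_bind[of "{0, 1}"]) (auto simp: action_value_def finite_set_pmf_outcome)
  also have "pmf (\<pi> 1 0) 0 = 1 - pmf (\<pi> 1 0) 1"
    using sum_pmf_eq_1[OF _ support] by simp
  finally show ?thesis
    by (simp add: algebra_simps)
qed

lemma optimal_gamble_mdp_iff:
  assumes "action_value g 0 \<noteq> action_value g 1"
  shows "optimal gamble_mdp (state2_reward g) \<pi> \<longleftrightarrow>
           policy_of gamble_mdp \<pi> \<and> pmf (\<pi> 1 0) 1 = of_bool (action_value g 0 < action_value g 1)"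
proof -
  define d where "d = action_value g 1 - action_value g 0"
  define best where "best = (of_bool (d > 0) :: real)"
  have value_eq: "value_of gamble_mdp \<rho> (state2_reward g) = action_value g 0 + pmf (\<rho> 1 0) 1 * d"
    if "policy_of gamble_mdp \<rho>" for \<rho>
    using value_of_gamble_mdp[OF that] by (simp add: d_def)
  have best_policy: "policy_of gamble_mdp (\<lambda>_ _. return_pmf (if d > 0 then 1 else 0))"
    by (rule policy_of_const) simp
  have best_max: "p * d \<le> best * d" if "0 \<le> p" "p \<le> 1" for p :: real
    using that mult_right_mono[of p 1 d] mult_right_mono_neg[of 0 p d]
    by (auto simp: best_def)
  have best_unique: "p * d < best * d" if "0 \<le> p" "p \<le> 1" "p \<noteq> best" for p :: real
    using that assms mult_strict_right_mono[of p 1 d] mult_strict_right_mono_neg[of 0 p d]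
    by (auto simp: best_def d_def)
  have "best = of_bool (action_value g 0 < action_value g 1)"
    by (simp add: best_def d_def)
  moreover have "optimal gamble_mdp (state2_reward g) \<pi> \<longleftrightarrow>
                   policy_of gamble_mdp \<pi> \<and> pmf (\<pi> 1 0) 1 = best"
  proof
    assume opt: "optimal gamble_mdp (state2_reward g) \<pi>"
    then have "policy_of gamble_mdp \<pi>"
      by (simp add: optimal_def)
    moreover have "best * d \<le> pmf (\<pi> 1 0) 1 * d"
      using opt best_policy value_eq[OF best_policy] value_eq[OF \<open>policy_of gamble_mdp \<pi>\<close>]
      unfolding optimal_def by (fastforce simp: best_def)
    ultimately show "policy_of gamble_mdp \<pi> \<and> pmf (\<pi> 1 0) 1 = best"
      using best_unique[of "pmf (\<pi> 1 0) 1"] pmf_le_1 by fastforce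
  next
    assume "policy_of gamble_mdp \<pi> \<and> pmf (\<pi> 1 0) 1 = best"
    then show "optimal gamble_mdp (state2_reward g) \<pi>"
      unfolding optimal_def using value_eq best_max[OF pmf_nonneg pmf_le_1] by auto
  qed
  ultimately show ?thesis
    by simp
qed

definition lottery_reward :: "nat \<Rightarrow> real" where
  "lottery_reward s = (if s = 3 then 3 else if s = 4 then 1 else 0)"

lemma action_value_lottery_reward: "action_value lottery_reward 1 < action_value lottery_reward 0"
  unfolding action_value_sure action_value_gamble by (simp add: lottery_reward_def)

lemma action_value_stretch_lottery_reward:
  "action_value (stretch \<circ> lottery_reward) 0 < action_value (stretch \<circ> lottery_reward) 1"
  unfolding action_value_sure action_value_gamble by (simp add: lottery_reward_def stretch_def)

lemma stretch_lottery_reward_diff: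
  "stretch (lottery_reward s) - stretch (lottery_reward s') = stretch (lottery_reward s - lottery_reward s')"
  by (rule stretch_diff) (simp_all add: lottery_reward_def)

theorem lemma1:
  shows "\<exists>M \<sigma>1 \<sigma>2 (r1 :: traj \<Rightarrow> real) (r2 :: traj \<Rightarrow> real).
     wf_mdp2 M \<and> link_function \<sigma>1 \<and> link_function \<sigma>2 \<and>
     (\<forall>\<tau>\<in>trajs M. \<forall>\<tau>'\<in>trajs M. \<sigma>1 (r1 \<tau> - r1 \<tau>') = \<sigma>2 (r2 \<tau> - r2 \<tau>')) \<and>
     (\<exists>\<pi>. optimal M r1 \<pi>) \<and> (\<exists>\<pi>. optimal M r2 \<pi>) \<and>
     (\<forall>\<pi>. optimal M r1 \<pi> \<longrightarrow> \<not> optimal M r2 \<pi>)"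
proof -
  define r1 where "r1 = state2_reward (stretch \<circ> lottery_reward)"
  define r2 where "r2 = state2_reward lottery_reward"
  have optimal_r1: "optimal gamble_mdp r1 \<pi> \<longleftrightarrow> policy_of gamble_mdp \<pi> \<and> pmf (\<pi> 1 0) 1 = 1"
    and optimal_r2: "optimal gamble_mdp r2 \<pi> \<longleftrightarrow> policy_of gamble_mdp \<pi> \<and> pmf (\<pi> 1 0) 1 = 0" for \<pi>
    using action_value_lottery_reward action_value_stretch_lottery_reward
    unfolding r1_def r2_def by (simp_all add: optimal_gamble_mdp_iff)
  have same_comparisons: "tanh_link (r1 \<tau> - r1 \<tau>') = (tanh_link \<circ> stretch) (r2 \<tau> - r2 \<tau>')" for \<tau> \<tau>'
    by (simp add: r1_def r2_def state2_reward_def stretch_lottery_reward_diff split: prod.splits)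
  have "link_function (tanh_link \<circ> stretch)"
    using link_function_comp_odd[OF link_function_tanh_link strict_mono_stretch continuous_on_stretch]
    by (simp add: stretch_minus)
  moreover have "optimal gamble_mdp r1 (\<lambda>_ _. return_pmf 1)" "optimal gamble_mdp r2 (\<lambda>_ _. return_pmf 0)"
    using policy_of_const by (simp_all add: optimal_r1 optimal_r2)
  moreover have "\<not> optimal gamble_mdp r2 \<pi>" if "optimal gamble_mdp r1 \<pi>" for \<pi>
    using that by (simp add: optimal_r1 optimal_r2)
  ultimately show ?thesis
    using wf_gamble_mdp link_function_tanh_link same_comparisons by blast
qed

end
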